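(* Let $\phi_0=0$. For each $a\in(-\tfrac12,\tfrac12)$ let $s_1(a)$ be the first positive zero of $f_a$. Then the image of $X_a:[-s_1(a),s_1(a)]\times\mathbb{S}^1\to\mathbb{S}^3$ is contained in the closed geodesic ball $B_{r(a)}(p_N)=\mathbb{S}^3\cap\{x^1\ge x_a(s_1(a))\}$, where $r(a)=\arccos x_a(s_1(a))$, and $r(a)<\tfrac\pi2$ if $a\in(-\tfrac12,0)$, $r(a)=\tfrac\pi2$ if $a=0$, $r(a)>\tfrac\pi2$ if $a\in(0,\tfrac12)$.
   Context: For $a\in(-\tfrac12,\tfrac12)$ and $\phi_0,t,s\in\mathbb{R}$ define $\psi(a,t)=\dfrac{(\frac14-a^2)^{1/2}}{(\frac12+a\cos 2t)^{1/2}(\frac12-a\cos 2t)}$, $\phi(a,s)=\phi_0+\int_0^s\psi(a,t)\,dt$, $x_a(s)=(\frac12-a\cos 2s)^{1/2}\cos\phi(a,s)$, $y_a(s)=(\frac12-a\cos 2s)^{1/2}\sin\phi(a,s)$, $z_a(s)=(\frac12+a\cos 2s)^{1/2}$, and $X_a:\mathbb{R}\times\mathbb{S}^1\to\mathbb{S}^3\subset\mathbb{R}^4$, $X_a(s,\theta)=(x_a(s),y_a(s),z_a(s)\cos\theta,z_a(s)\sin\theta)$. Define $f_a(s)=a\sin(2s)\sin\phi(a,s)+(\tfrac14-a^2)^{1/2}(\tfrac12+a\cos 2s)^{1/2}\cos\phi(a,s)$ (it has positive zeros). $p_N=(1,0,0,0)$ and $B_r(p_N)$ is the closed geodesic ball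 in $\mathbb{S}^3$ of radius $r$ centered at $p_N$, i.e. $\mathbb{S}^3\cap\{x^1\ge\cos r\}$. *)

theory Defs
  imports "HOL-Analysis.Analysis"
begin

definition psi :: "real \<Rightarrow> real \<Rightarrow> real" where
  "psi a t = sqrt (1/4 - a\<^sup>2) / (sqrt (1/2 + a * cos (2*t)) * (1/2 - a * cos (2*t)))"

definition phi :: "real \<Rightarrow> real \<Rightarrow> real" where
  "phi a s = (if 0 \<le> s then integral {0..s} (psi a) else - integral {s..0} (psi a))"

definition xa :: "real \<Rightarrow> real \<Rightarrow> real" where
  "xa a t = sqrt (1/2 - a * cos (2*t)) * cos (phi a t)"

definition ya :: "real \<Rightarrow> real \<Rightarrow> real" where
  "ya a t = sqrt (1/2 - a * cos (2*t)) * sin (phi a t)"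

definition za :: "real \<Rightarrow> real \<Rightarrow> real" where
  "za a t = sqrt (1/2 + a * cos (2*t))"

definition Xa :: "real \<Rightarrow> real \<Rightarrow> real \<Rightarrow> real^4" where
  "Xa a s \<theta> = vector [xa a s, ya a s, za a s * cos \<theta>, za a s * sin \<theta>]"

definition fa :: "real \<Rightarrow> real \<Rightarrow> real" where
  "fa a t = a * sin (2*t) * sin (phi a t)
           + sqrt (1/4 - a\<^sup>2) * sqrt (1/2 + a * cos (2*t)) * cos (phi a t)"

definition s1 :: "real \<Rightarrow> real" where
  "s1 a = (LEAST s. 0 < s \<and> fa a s = 0)"

definition S3 :: "(real^4) set" where
  "S3 = {p. norm p = 1}"

text \<open>closed geodesic ball of radius r about p_N = (1,0,0,0)\<close>
definition geoball :: "real \<Rightarrow> (real^4) set" where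
  "geoball r = S3 \<inter> {p. p $ 1 \<ge> cos r}"

end

theory Submission imports Defs begin

text \<open>Write \<open>z = sqrt (1/2 + a cos 2s)\<close>, \<open>R = sqrt (1/2 - a cos 2s)\<close>, \<open>c = sqrt (1/4 - a\<^sup>2)\<close>.
  The first coordinate \<open>x_a = R cos \<phi>\<close> has derivative \<open>(a sin 2s z cos \<phi> - c sin \<phi>) / (z R)\<close>.
  On \<open>[0, s\<^sub>1]\<close> the numerator is nonpositive: where \<open>cos \<phi> \<le> 0\<close> because \<open>f_a \<ge> 0\<close> there,
  and where \<open>\<phi>\<close> is acute because \<open>\<phi>(s) \<ge> arctan (k tan s)\<close> with \<open>k = c / (1/2 - a)\<close>,
  which solves the equation of \<open>\<phi>\<close> with the factor \<open>z < 1\<close> replaced by 1. Hence the even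
  function \<open>x_a\<close> is smallest on \<open>[-s\<^sub>1, s\<^sub>1]\<close> at \<open>\<plusminus>s\<^sub>1\<close>. The same comparison gives
  \<open>\<phi>(\<pi>/2) > \<pi>/2\<close>, which forces \<open>s\<^sub>1 < \<pi>/2\<close> and \<open>0 < \<phi>(s\<^sub>1) < \<pi>\<close>; then \<open>f_a(s\<^sub>1) = 0\<close>
  says that \<open>cos \<phi>(s\<^sub>1)\<close>, and with it \<open>x_a(s\<^sub>1)\<close>, has the sign of \<open>-a\<close>.\<close>

lemma vector4_nth_1: "(vector [p, q, r, t] :: real^4) $ 1 = p"
  unfolding vector_def by simp

lemma norm_vector4: "norm (vector [p, q, r, t] :: real^4) = sqrt (p\<^sup>2 + q\<^sup>2 + r\<^sup>2 + t\<^sup>2)"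
proof -
  have "(vector [p, q, r, t] :: real^4) $ 2 = q" "(vector [p, q, r, t] :: real^4) $ 3 = r"
    "(vector [p, q, r, t] :: real^4) $ 4 = t"
    unfolding vector_def by simp_all
  then show ?thesis
    unfolding norm_eq_sqrt_inner inner_vec_def sum_4 by (simp add: vector4_nth_1 power2_eq_square)
qed

lemma has_real_derivative_oriented_integral:
  fixes f :: "real \<Rightarrow> real"
  assumes cont: "continuous_on UNIV f"
  shows "((\<lambda>s. if 0 \<le> s then integral {0..s} f else - integral {s..0} f) has_real_derivative f x) (at x)"
proof -
  define b where "b = min x 0 - 1"
  define B where "B = max x 0 + 1"
  have int: "f integrable_on {u..v}" for u v
    using cont by (intro integrable_continuous_interval) (rule continuous_on_subset, auto)
  have eq: "(if 0 \<le> s then integral {0..s} f else - integral {s..0} f)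
      = integral {b..s} f - integral {b..0} f" if "s \<in> {b<..<B}" for s
  proof (cases "0 \<le> s")
    case True
    have "integral {b..0} f + integral {0..s} f = integral {b..s} f"
      by (rule Henstock_Kurzweil_Integration.integral_combine) (use True b_def int in auto)
    then show ?thesis using True by simp
  next
    case False
    have "integral {b..s} f + integral {s..0} f = integral {b..0} f"
      by (rule Henstock_Kurzweil_Integration.integral_combine) (use False that b_def int in auto)
    then show ?thesis using False by simp
  qed
  have "((\<lambda>s. integral {b..s} f) has_real_derivative f x) (at x within {b..B})"
    by (rule integral_has_real_derivative) (use cont b_def B_def in \<open>auto intro: continuous_on_subset\<close>)
  then have "((\<lambda>s. integral {b..s} f) has_real_derivative f x) (at x within {b<..<B})"
    by (rule has_field_derivative_subset) auto
  then have "((\<lambda>s. integral {b..s} f) has_real_derivative f x) (at x)"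
    using at_within_open[of x "{b<..<B}"] b_def B_def by (simp add: min_def max_def)
  then have "((\<lambda>s. integral {b..s} f - integral {b..0} f) has_real_derivative f x) (at x)"
    by (auto intro!: derivative_eq_intros)
  then show ?thesis
    by (rule has_field_derivative_transform_within_open[where S="{b<..<B}"])
       (use b_def B_def eq in auto)
qed

lemma least_positive_zero:
  fixes f :: "real \<Rightarrow> real"
  assumes cont: "continuous_on UNIV f" and f0: "0 < f 0" and b: "0 < b" "f b < 0"
  defines "s \<equiv> LEAST s. 0 < s \<and> f s = 0"
  shows "0 < s" "s < b" "f s = 0" "\<And>t. 0 \<le> t \<Longrightarrow> t < s \<Longrightarrow> 0 < f t"
proof -
  have zero_below: "\<exists>z. 0 < z \<and> z \<le> t \<and> f z = 0" if t: "0 \<le> t" "f t \<le> 0" for t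
  proof -
    have "continuous_on {0..t} f" using cont by (rule continuous_on_subset) simp
    then obtain z where "0 \<le> z" "z \<le> t" "f z = 0"
      using IVT2'[of f t 0 0] t f0 by auto
    moreover have "z \<noteq> 0" using f0 \<open>f z = 0\<close> by auto
    ultimately show ?thesis by (intro exI[of _ z]) auto
  qed
  define Z where "Z = {z \<in> {0..b}. f z = 0}"
  have "Z = {0..b} \<inter> {z \<in> UNIV. f z = 0}" unfolding Z_def by auto
  then have Z_compact: "compact Z"
    using compact_Int_closed[OF compact_Icc continuous_closed_preimage_constant[OF cont closed_UNIV]]
    by simp
  obtain z where "0 < z" "z \<le> b" "f z = 0"
    using zero_below[of b] b by (auto simp: less_imp_le)
  then have "Z \<noteq> {}" unfolding Z_def by auto
  then obtain m where m: "m \<in> Z" and m_min: "\<And>z. z \<in> Z \<Longrightarrow> m \<le> z"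
    using compact_attains_inf[OF Z_compact] by blast
  have m_props: "0 \<le> m" "m \<le> b" "f m = 0" using m unfolding Z_def by auto
  have m_pos: "0 < m" using m_props f0 by (cases "m = 0") auto
  have m_least: "m \<le> z" if z: "0 < z" "f z = 0" for z
  proof (cases "z \<le> b")
    case True
    then show ?thesis using z by (intro m_min) (simp add: Z_def)
  next
    case False
    then show ?thesis using m_props by simp
  qed
  have s_eq: "s = m" unfolding s_def by (rule Least_equality) (use m_props m_pos m_least in auto)
  show "0 < s" using s_eq m_pos by simp
  show "f s = 0" using s_eq m_props(3) by simp
  have "m \<noteq> b" using m_props(3) b(2) by auto
  then show "s < b" using s_eq m_props(2) by linarith
  show "0 < f t" if t: "0 \<le> t" "t < s" for t
  proof (rule ccontr)
    assume "\<not> 0 < f t"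
    then obtain z where "0 < z" "z \<le> t" "f z = 0" using zero_below[OF t(1)] by force
    then show False using m_least[of z] t s_eq by linarith
  qed
qed

lemma DERIV_arctan_scaled_tan:
  fixes k t :: real
  assumes "cos t \<noteq> 0"
  shows "((\<lambda>s. arctan (k * tan s)) has_real_derivative k / ((cos t)\<^sup>2 + k\<^sup>2 * (sin t)\<^sup>2)) (at t)"
proof -
  have "((\<lambda>s. arctan (k * tan s)) has_real_derivative
      inverse (1 + (k * tan t)\<^sup>2) * (k * inverse ((cos t)\<^sup>2))) (at t)"
    using assms by (auto intro!: derivative_eq_intros)
  moreover have "inverse (1 + (k * tan t)\<^sup>2) * (k * inverse ((cos t)\<^sup>2))
      = k / ((cos t)\<^sup>2 + k\<^sup>2 * (sin t)\<^sup>2)"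
    using assms unfolding tan_def by (simp add: field_simps power2_eq_square)
  ultimately show ?thesis by simp
qed

lemma tendsto_arctan_scaled_tan_at_left:
  fixes k :: real
  assumes "0 < k"
  shows "((\<lambda>t. arctan (k * tan t)) \<longlongrightarrow> pi/2) (at_left (pi/2))"
  by (rule filterlim_compose[OF tendsto_arctan_at_top filterlim_tendsto_pos_mult_at_top])
     (use assms filterlim_tan_at_left in auto)

lemma half_plus_mult_cos_pos:
  fixes a x :: real
  assumes "\<bar>a\<bar> < 1/2"
  shows "0 < 1/2 + a * cos x" "0 < 1/2 - a * cos x"
proof -
  have "\<bar>a * cos x\<bar> \<le> \<bar>a\<bar>"
    using abs_cos_le_one[of x] by (simp add: abs_mult mult_left_le)
  then show "0 < 1/2 + a * cos x" "0 < 1/2 - a * cos x" using assms by auto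
qed

lemma phi_zero: "phi a 0 = 0"
  by (simp add: phi_def)

lemma Xa_nth_1: "Xa a s \<theta> $ 1 = xa a s"
  unfolding Xa_def by (rule vector4_nth_1)

definition c_a :: "real \<Rightarrow> real" where
  "c_a a = sqrt (1/4 - a\<^sup>2)"

definition k_a :: "real \<Rightarrow> real" where
  "k_a a = c_a a / (1/2 - a)"

context
  fixes a :: real
  assumes a_gt: "-1/2 < a" and a_lt: "a < 1/2"
begin

lemma cos_terms_pos: "0 < 1/2 + a * cos x" "0 < 1/2 - a * cos x"
  using half_plus_mult_cos_pos[of a x] a_gt a_lt by auto

lemma sqrt_cos_term_bounds: "0 < sqrt (1/2 + a * cos x)" "sqrt (1/2 + a * cos x) < 1"
  using cos_terms_pos[of x] by auto

lemma quarter_minus_sq_pos: "0 < 1/4 - a\<^sup>2"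
proof -
  have "0 < (1/2 - a) * (1/2 + a)" using a_gt a_lt by simp
  then show ?thesis by (simp add: algebra_simps power2_eq_square)
qed

lemma c_a_pos: "0 < c_a a"
  unfolding c_a_def using quarter_minus_sq_pos by simp

lemma c_a_sq: "(c_a a)\<^sup>2 = (1/2 - a) * (1/2 + a)"
  unfolding c_a_def using quarter_minus_sq_pos by (simp add: algebra_simps power2_eq_square)

lemma k_a_pos: "0 < k_a a"
  unfolding k_a_def using c_a_pos a_lt by simp

lemma k_a_sq_mult: "(1/2 - a) * (k_a a)\<^sup>2 = 1/2 + a"
  unfolding k_a_def power_divide c_a_sq using a_lt by (simp add: power2_eq_square)

lemma c_a_mult_k_a: "c_a a * k_a a = 1/2 + a"
  unfolding k_a_def using c_a_sq a_lt by (simp add: power2_eq_square)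

lemma psi_eq: "psi a t = c_a a / (sqrt (1/2 + a * cos (2*t)) * (1/2 - a * cos (2*t)))"
  unfolding psi_def c_a_def ..

lemma psi_pos: "0 < psi a t"
  unfolding psi_eq using c_a_pos cos_terms_pos sqrt_cos_term_bounds by simp

lemma continuous_on_psi: "continuous_on S (psi a)"
  unfolding psi_def using cos_terms_pos
  by (intro continuous_intros) (auto simp: less_imp_neq[symmetric])

lemma phi_has_derivative: "(phi a has_real_derivative psi a t) (at t)"
proof -
  have "phi a = (\<lambda>s. if 0 \<le> s then integral {0..s} (psi a) else - integral {s..0} (psi a))"
    by (simp add: phi_def fun_eq_iff)
  then show ?thesis using has_real_derivative_oriented_integral[OF continuous_on_psi] by simp
qed

lemma continuous_on_phi: "continuous_on S (phi a)"
  using phi_has_derivative by (meson DERIV_isCont continuous_at_imp_continuous_on)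

lemma phi_strict_mono: "s < t \<Longrightarrow> phi a s < phi a t"
  by (rule DERIV_pos_imp_increasing) (use phi_has_derivative psi_pos in auto)

lemma phi_nonneg: "0 \<le> s \<Longrightarrow> 0 \<le> phi a s"
  using phi_strict_mono[of 0 s] by (cases "s = 0") (auto simp: phi_zero)

lemma phi_minus: "phi a (-s) = - phi a s"
proof -
  have "((\<lambda>s. phi a (-s) + phi a s) has_real_derivative 0) (at x)" for x
  proof -
    have "((\<lambda>s. phi a (-s) + phi a s) has_real_derivative psi a (-x) * -1 + psi a x) (at x)"
      by (rule derivative_eq_intros DERIV_chain2[OF phi_has_derivative] refl)+ simp
    moreover have "psi a (-x) = psi a x" by (simp add: psi_def)
    ultimately show ?thesis by simp
  qed
  from DERIV_isconst_all[OF allI[OF this], of s 0] show ?thesis by (simp add: phi_zero)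
qed

lemma xa_minus: "xa a (-s) = xa a s"
  by (simp add: xa_def phi_minus)

lemma Xa_in_S3: "Xa a s \<theta> \<in> S3"
proof -
  have R: "(sqrt (1/2 - a * cos (2 * s)))\<^sup>2 = 1/2 - a * cos (2 * s)"
    and z: "(za a s)\<^sup>2 = 1/2 + a * cos (2 * s)"
    unfolding za_def using cos_terms_pos[of "2 * s"] by simp_all
  have "(xa a s)\<^sup>2 + (ya a s)\<^sup>2 + (za a s * cos \<theta>)\<^sup>2 + (za a s * sin \<theta>)\<^sup>2
     = (1/2 - a * cos (2 * s)) * ((cos (phi a s))\<^sup>2 + (sin (phi a s))\<^sup>2)
       + (za a s)\<^sup>2 * ((cos \<theta>)\<^sup>2 + (sin \<theta>)\<^sup>2)"
    unfolding xa_def ya_def power_mult_distrib R by algebra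
  also have "\<dots> = 1" unfolding z by simp
  finally show ?thesis unfolding S3_def Xa_def by (simp add: norm_vector4)
qed

lemma abs_xa_le_1: "\<bar>xa a s\<bar> \<le> 1"
  using component_le_norm_cart[of "Xa a s 0" 1] Xa_in_S3 unfolding S3_def Xa_nth_1 by simp

lemma arctan_rate_eq:
  assumes "cos t \<noteq> 0"
  shows "c_a a / (1/2 - a * cos (2*t)) = k_a a / ((cos t)\<^sup>2 + (k_a a)\<^sup>2 * (sin t)\<^sup>2)"
proof -
  have "1/2 - a * cos (2*t) = 1/2 * ((sin t)\<^sup>2 + (cos t)\<^sup>2) - a * ((cos t)\<^sup>2 - (sin t)\<^sup>2)"
    by (simp only: sin_cos_squared_add cos_double)
  also have "\<dots> = (1/2 - a) * (cos t)\<^sup>2 + (1/2 + a) * (sin t)\<^sup>2"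
    by (simp add: algebra_simps)
  also have "\<dots> = (1/2 - a) * ((cos t)\<^sup>2 + (k_a a)\<^sup>2 * (sin t)\<^sup>2)"
    unfolding k_a_sq_mult[symmetric] by (simp add: algebra_simps)
  finally have "1/2 - a * cos (2*t) = (1/2 - a) * ((cos t)\<^sup>2 + (k_a a)\<^sup>2 * (sin t)\<^sup>2)" .
  then show ?thesis unfolding k_a_def by simp
qed

lemma psi_gt_arctan_rate: "c_a a / (1/2 - a * cos (2*t)) < psi a t"
  unfolding psi_eq using c_a_pos cos_terms_pos sqrt_cos_term_bounds
  by (intro divide_strict_left_mono) (auto simp: mult_less_cancel_right1)

lemma phi_minus_arctan_strict_mono:
  assumes "-(pi/2) < s" "s < t" "t < pi/2"
  shows "phi a s - arctan (k_a a * tan s) < phi a t - arctan (k_a a * tan t)"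
proof (rule DERIV_pos_imp_increasing[OF \<open>s < t\<close>])
  fix x assume "s \<le> x" "x \<le> t"
  then have "cos x \<noteq> 0" using assms cos_gt_zero_pi[of x] by auto
  then have "((\<lambda>s. phi a s - arctan (k_a a * tan s)) has_real_derivative
      psi a x - k_a a / ((cos x)\<^sup>2 + (k_a a)\<^sup>2 * (sin x)\<^sup>2)) (at x)"
    by (intro DERIV_diff phi_has_derivative DERIV_arctan_scaled_tan)
  moreover have "0 < psi a x - k_a a / ((cos x)\<^sup>2 + (k_a a)\<^sup>2 * (sin x)\<^sup>2)"
    using psi_gt_arctan_rate[of x] arctan_rate_eq[OF \<open>cos x \<noteq> 0\<close>] by simp
  ultimately show "\<exists>y. ((\<lambda>s. phi a s - arctan (k_a a * tan s)) has_real_derivative y) (at x) \<and> 0 < y"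
    by blast
qed

lemma arctan_le_phi: "0 \<le> t \<Longrightarrow> t < pi/2 \<Longrightarrow> arctan (k_a a * tan t) \<le> phi a t"
  using phi_minus_arctan_strict_mono[of 0 t] by (cases "t = 0") (auto simp: phi_zero)

lemma phi_pi_half_gt: "pi/2 < phi a (pi/2)"
proof -
  define d where "d = phi a (pi/4) - arctan (k_a a * tan (pi/4))"
  have quarter: "-(pi/2) < 0" "0 < pi/4" "-(pi/2) < pi/4" "pi/4 < pi/2" using pi_gt_zero by linarith+
  have d_pos: "0 < d"
    using phi_minus_arctan_strict_mono[OF quarter(1,2,4)] unfolding d_def by (simp add: phi_zero)
  have "d + arctan (k_a a * tan t) \<le> phi a (pi/2)" if t: "pi/4 < t" "t < pi/2" for t
  proof -
    have "d + arctan (k_a a * tan t) < phi a t"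
      using phi_minus_arctan_strict_mono[OF quarter(3) t] unfolding d_def by linarith
    also have "\<dots> < phi a (pi/2)" by (rule phi_strict_mono[OF t(2)])
    finally show ?thesis by simp
  qed
  then have "\<forall>\<^sub>F t in at_left (pi/2). d + arctan (k_a a * tan t) \<le> phi a (pi/2)"
    using quarter(4) by (intro eventually_at_leftI[of "pi/4"]) auto
  then have "d + pi/2 \<le> phi a (pi/2)"
    by (rule tendsto_upperbound[OF tendsto_add[OF tendsto_const tendsto_arctan_scaled_tan_at_left[OF k_a_pos]]])
       simp
  then show ?thesis using d_pos by simp
qed

lemma fa_eq: "fa a t = a * sin (2*t) * sin (phi a t) + c_a a * sqrt (1/2 + a * cos (2*t)) * cos (phi a t)"
  unfolding fa_def c_a_def ..

lemma continuous_on_fa: "continuous_on S (fa a)"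
  unfolding fa_def by (intro continuous_intros continuous_on_phi)

lemma fa_zero_pos: "0 < fa a 0"
  unfolding fa_eq using c_a_pos cos_terms_pos[of 0] by (simp add: phi_zero)

lemma fa_neg_at_phi_pi: "phi a s = pi \<Longrightarrow> fa a s < 0"
  unfolding fa_eq using c_a_pos sqrt_cos_term_bounds(1)[of "2 * s"] by simp

lemma fa_neg_before_pi_half: "\<exists>b. 0 < b \<and> b \<le> pi/2 \<and> fa a b < 0"
proof (cases "phi a (pi/2) < pi")
  case True
  then have "cos (phi a (pi/2)) < 0" using phi_pi_half_gt by (intro cos_lt_zero_pi) auto
  then have "fa a (pi/2) < 0"
    unfolding fa_eq using c_a_pos sqrt_cos_term_bounds(1)[of pi] by (simp add: mult_pos_neg)
  then show ?thesis by (intro exI[of _ "pi/2"]) auto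
next
  case False
  then obtain b where b: "0 \<le> b" "b \<le> pi/2" "phi a b = pi"
    using IVT'[of "phi a" 0 pi "pi/2"] continuous_on_phi by (auto simp: phi_zero)
  then have "b \<noteq> 0" by (auto simp: phi_zero)
  then show ?thesis using b fa_neg_at_phi_pi by (intro exI[of _ b]) auto
qed

lemma s1_first_zero:
  "0 < s1 a" "s1 a < pi/2" "fa a (s1 a) = 0" "0 \<le> t \<Longrightarrow> t < s1 a \<Longrightarrow> 0 < fa a t"
proof -
  obtain b where b: "0 < b" "b \<le> pi/2" "fa a b < 0" using fa_neg_before_pi_half by blast
  note first_zero = least_positive_zero[OF continuous_on_fa fa_zero_pos b(1,3), folded s1_def]
  then show "0 < s1 a" "fa a (s1 a) = 0" "0 \<le> t \<Longrightarrow> t < s1 a \<Longrightarrow> 0 < fa a t" by blast+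
  show "s1 a < pi/2" using first_zero(2) b(2) by simp
qed

lemma fa_nonneg_upto_s1: "0 \<le> t \<Longrightarrow> t \<le> s1 a \<Longrightarrow> 0 \<le> fa a t"
  using s1_first_zero(3) s1_first_zero(4)[of t] by (cases "t = s1 a") auto

lemma phi_lt_pi: "0 \<le> s \<Longrightarrow> s \<le> s1 a \<Longrightarrow> phi a s < pi"
proof (rule ccontr)
  assume s: "0 \<le> s" "s \<le> s1 a" and "\<not> phi a s < pi"
  then obtain t where "0 \<le> t" "t \<le> s" "phi a t = pi"
    using IVT'[of "phi a" 0 pi s] continuous_on_phi by (auto simp: phi_zero)
  then show False using fa_neg_at_phi_pi fa_nonneg_upto_s1[of t] s by fastforce
qed

lemma xa_has_derivative:
  fixes t :: real
  defines "z \<equiv> sqrt (1/2 + a * cos (2*t))" and "R \<equiv> sqrt (1/2 - a * cos (2*t))"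
  shows "(xa a has_real_derivative
    (a * sin (2*t) * z * cos (phi a t) - c_a a * sin (phi a t)) / (z * R)) (at t)"
proof -
  have u_pos: "0 < 1/2 - a * cos (2*t)" by (rule cos_terms_pos)
  have R_deriv: "((\<lambda>t. sqrt (1/2 - a * cos (2*t))) has_real_derivative a * sin (2*t) / R) (at t)"
    using u_pos unfolding R_def by (auto intro!: derivative_eq_intros simp: field_simps)
  have "(xa a has_real_derivative
      a * sin (2*t) / R * cos (phi a t) + - sin (phi a t) * psi a t * R) (at t)"
    unfolding xa_def[abs_def] R_def
    by (rule DERIV_mult[OF R_deriv[unfolded R_def] DERIV_chain2[OF DERIV_cos phi_has_derivative]])
  moreover have "a * sin (2*t) / R * cos (phi a t) + - sin (phi a t) * psi a t * R
      = (a * sin (2*t) * z * cos (phi a t) - c_a a * sin (phi a t)) / (z * R)"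
    unfolding psi_eq z_def[symmetric] using sqrt_cos_term_bounds(1)[of "2*t"] u_pos
    by (simp add: R_def z_def field_simps)
  ultimately show ?thesis by simp
qed

lemma xa_numerator_neg_obtuse:
  assumes sin_pos: "0 < sin (phi a t)" and cos_nonpos: "cos (phi a t) \<le> 0" and "0 \<le> fa a t"
  shows "a * sin (2*t) * sqrt (1/2 + a * cos (2*t)) * cos (phi a t) - c_a a * sin (phi a t) < 0"
proof -
  define z where "z = sqrt (1/2 + a * cos (2*t))"
  define ph where "ph = phi a t"
  have z_pos: "0 < z" unfolding z_def by (rule sqrt_cos_term_bounds)
  have "sin ph * (a * sin (2*t) * z * cos ph - c_a a * sin ph)
      = z * cos ph * fa a t - c_a a * ((sin ph)\<^sup>2 + z\<^sup>2 * (cos ph)\<^sup>2)"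
    unfolding fa_eq ph_def[symmetric] z_def[symmetric] power2_eq_square by algebra
  moreover have "z * cos ph * fa a t \<le> 0"
    using z_pos cos_nonpos \<open>0 \<le> fa a t\<close> unfolding ph_def
    by (intro mult_nonpos_nonneg mult_nonneg_nonpos) auto
  moreover have "0 < c_a a * ((sin ph)\<^sup>2 + z\<^sup>2 * (cos ph)\<^sup>2)"
    using c_a_pos sin_pos unfolding ph_def by (intro mult_pos_pos add_pos_nonneg) auto
  ultimately have "sin ph * (a * sin (2*t) * z * cos ph - c_a a * sin ph) < 0" by linarith
  then show ?thesis using sin_pos unfolding ph_def z_def by (simp add: mult_less_0_iff)
qed

lemma xa_numerator_nonpos_acute:
  assumes t: "0 \<le> t" "t < pi/2" and ph: "0 \<le> phi a t" "phi a t < pi/2"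
  shows "a * sin (2*t) * sqrt (1/2 + a * cos (2*t)) * cos (phi a t) \<le> c_a a * sin (phi a t)"
proof -
  define z where "z = sqrt (1/2 + a * cos (2*t))"
  define ph where "ph = phi a t"
  have z_bounds: "0 < z" "z < 1" unfolding z_def by (rule sqrt_cos_term_bounds)+
  have cos_t: "0 < cos t" using t cos_gt_zero_pi by auto
  have sin_t: "0 \<le> sin t" using t sin_ge_zero by auto
  have cos_ph: "0 < cos ph" using ph cos_gt_zero_pi unfolding ph_def by auto
  have "2 * a * z * (cos t)\<^sup>2 \<le> 1/2 + a"
  proof (cases "a \<le> 0")
    case True
    then have "2 * a * z * (cos t)\<^sup>2 \<le> 0" using z_bounds by (simp add: mult_nonpos_nonneg)
    then show ?thesis using a_gt by linarith
  next
    case False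
    have "z * (cos t)\<^sup>2 \<le> 1"
      using z_bounds abs_cos_le_one[of t] by (intro mult_le_one) (auto simp: abs_square_le_1)
    then have "2 * a * (z * (cos t)\<^sup>2) \<le> 2 * a" using False by (simp add: mult_left_le)
    then show ?thesis using a_lt by (simp add: mult.assoc)
  qed
  then have "sin t * (2 * a * z * (cos t)\<^sup>2) \<le> sin t * (1/2 + a)"
    using sin_t by (rule mult_left_mono)
  then have "a * sin (2*t) * z * cos t \<le> (1/2 + a) * sin t"
    unfolding sin_double by (simp add: power2_eq_square algebra_simps)
  then have "a * sin (2*t) * z \<le> c_a a * (k_a a * tan t)"
    using cos_t unfolding tan_def mult.assoc[symmetric] c_a_mult_k_a by (simp add: field_simps)
  also have "\<dots> \<le> c_a a * tan ph"
  proof -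
    have "arctan (k_a a * tan t) \<le> arctan (tan ph)"
      using arctan_le_phi[OF t] arctan_tan[of ph] ph unfolding ph_def by simp
    then show ?thesis using c_a_pos by (simp add: arctan_le_iff)
  qed
  finally have "a * sin (2*t) * z * cos ph \<le> c_a a * tan ph * cos ph"
    using cos_ph by simp
  then show ?thesis using cos_ph unfolding tan_def ph_def z_def by simp
qed

lemma xa_numerator_nonpos:
  assumes t: "0 \<le> t" "t \<le> s1 a"
  shows "a * sin (2*t) * sqrt (1/2 + a * cos (2*t)) * cos (phi a t) - c_a a * sin (phi a t) \<le> 0"
proof (cases "phi a t < pi/2")
  case True
  then show ?thesis
    using xa_numerator_nonpos_acute[OF t(1) _ phi_nonneg[OF t(1)]] t s1_first_zero(2) by simp
next
  case False
  have ph_lt: "phi a t < pi" by (rule phi_lt_pi[OF t])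
  have "cos (phi a t) \<le> 0"
    using cos_ge_zero[of "pi - phi a t"] False ph_lt by simp
  moreover have "0 < sin (phi a t)"
    using False ph_lt pi_gt_zero by (intro sin_gt_zero) linarith+
  ultimately show ?thesis
    using xa_numerator_neg_obtuse fa_nonneg_upto_s1[OF t] by (simp add: less_imp_le)
qed

lemma xa_s1_le: "\<bar>s\<bar> \<le> s1 a \<Longrightarrow> xa a (s1 a) \<le> xa a s"
proof -
  assume s: "\<bar>s\<bar> \<le> s1 a"
  have "xa a (s1 a) \<le> xa a \<bar>s\<bar>"
  proof (rule DERIV_nonpos_imp_nonincreasing[OF s])
    fix t assume "\<bar>s\<bar> \<le> t" "t \<le> s1 a"
    then have "0 \<le> t" by linarith
    then show "\<exists>y. (xa a has_real_derivative y) (at t) \<and> y \<le> 0"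
      using xa_has_derivative[of t] xa_numerator_nonpos[OF \<open>0 \<le> t\<close> \<open>t \<le> s1 a\<close>]
        sqrt_cos_term_bounds(1)[of "2*t"] cos_terms_pos(2)[of "2*t"]
      by (intro exI conjI) (auto intro: divide_nonpos_pos)
  qed
  then show ?thesis using xa_minus[of s] by (cases "0 \<le> s") auto
qed

lemma sgn_xa_s1: "sgn (xa a (s1 a)) = - sgn a"
proof -
  define s where "s = s1 a"
  define ph where "ph = phi a s"
  define z where "z = sqrt (1/2 + a * cos (2 * s))"
  have s: "0 < s" "s < pi/2" unfolding s_def using s1_first_zero(1,2) by auto
  have ph: "0 < ph" "ph < pi"
    unfolding ph_def using phi_strict_mono[OF s(1)] phi_lt_pi[of s] s by (auto simp: phi_zero s_def)
  have "0 < sin (2 * s) * sin ph"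
    using s ph by (intro mult_pos_pos sin_gt_zero) auto
  moreover have "0 < c_a a * z" unfolding z_def using c_a_pos sqrt_cos_term_bounds(1) by simp
  moreover have "a * (sin (2 * s) * sin ph) = - (c_a a * z * cos ph)"
    using s1_first_zero(3) unfolding fa_eq s_def[symmetric] ph_def[symmetric] z_def[symmetric]
    by (simp add: algebra_simps)
  ultimately have "sgn a = - sgn (cos ph)"
    by (metis sgn_mult sgn_pos mult.right_neutral mult.left_neutral sgn_minus)
  moreover have "sgn (xa a s) = sgn (cos ph)"
    unfolding xa_def ph_def[symmetric] sgn_mult using cos_terms_pos(2)[of "2 * s"] by simp
  ultimately show ?thesis unfolding s_def by simp
qed

end

theorem mainTheorem7:
  fixes a :: real
  assumes "-1/2 < a" and "a < 1/2"
  shows "(\<lambda>(s, \<theta>). Xa a s \<theta>) ` ({- s1 a .. s1 a} \<times> UNIV) \<subseteq> geoball (arccos (xa a (s1 a)))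
    \<and> geoball (arccos (xa a (s1 a))) = S3 \<inter> {p. p $ 1 \<ge> xa a (s1 a)}
    \<and> (a < 0 \<longrightarrow> arccos (xa a (s1 a)) < pi/2)
    \<and> (a = 0 \<longrightarrow> arccos (xa a (s1 a)) = pi/2)
    \<and> (0 < a \<longrightarrow> arccos (xa a (s1 a)) > pi/2)"
proof -
  define x where "x = xa a (s1 a)"
  have x_bound: "\<bar>x\<bar> \<le> 1" unfolding x_def by (rule abs_xa_le_1[OF assms])
  then have ball: "geoball (arccos x) = S3 \<inter> {p. x \<le> p $ 1}"
    unfolding geoball_def by simp
  have "(\<lambda>(s, \<theta>). Xa a s \<theta>) ` ({- s1 a .. s1 a} \<times> UNIV) \<subseteq> S3 \<inter> {p. x \<le> p $ 1}"
    using Xa_in_S3[OF assms] xa_s1_le[OF assms] unfolding x_def by (auto simp: Xa_nth_1)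
  moreover have "arccos x < pi/2 \<longleftrightarrow> 0 < x" "pi/2 < arccos x \<longleftrightarrow> x < 0"
    "arccos x = pi/2 \<longleftrightarrow> x = 0"
    using arccos_less_mono[OF x_bound, of 0] arccos_less_mono[OF _ x_bound, of 0] arccos_eq_iff[of x 0]
      x_bound by auto
  moreover have "sgn x = - sgn a" unfolding x_def by (rule sgn_xa_s1[OF assms])
  ultimately show ?thesis unfolding x_def[symmetric] ball by (auto simp: sgn_if split: if_splits)
qed

end
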